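(* Let $p\in[1,\infty)\setminus\{2\}$, let $(X,\mathcal{B},\mu)$ and $(Y,\mathcal{C},\nu)$ be $\sigma$-finite measure spaces, and let $\lambda\mapsto s_\lambda\in L(L^p(X,\mu),L^p(Y,\nu))$, $\lambda\in[0,1]$, be a norm continuous path of surjective isometries. Let $S_\lambda$ be the spatial realization of $s_\lambda$. Then $S_0=S_1$.
   Context: By Lamperti's theorem (cited), for $p\ne2$ every surjective isometry $s$ between such $L^p$ spaces is a spatial isometry: there are a bijective measurable set transformation $S\colon\mathcal{B}/\mathcal{N}(\mu)\to\mathcal{C}/\mathcal{N}(\nu)$ (a Boolean algebra homomorphism preserving countable unions, $\mathcal{N}$ denoting null sets) and a measurable $g$ with $|g|=1$ a.e. such that $s\xi=g\,[dS_*(\mu)/d\nu]^{1/p}S_*(\xi)$, where $S_*$ is the induced linear map on measurable functions with $S_*(\chi_E)=\chi_{S(E)}$ preserving a.e. limits, and $S_*(\mu)(F)=\mu(E)$ when $S([E])=[F]$. This $S$ is uniquely determined by $s$ and is called its spatial realization. *)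

theory Defs
  imports "HOL-Analysis.Analysis"
begin

text \<open>Elements of L^p(X,mu) are represented by complex-valued measurable functions
  with integrable p-th power of the modulus; operators act on representatives and are
  required to respect equality almost everywhere.\<close>

definition Lp_fun :: "'a measure \<Rightarrow> real \<Rightarrow> ('a \<Rightarrow> complex) \<Rightarrow> bool" where
  "Lp_fun M p f \<longleftrightarrow> f \<in> borel_measurable M \<and> integrable M (\<lambda>x. norm (f x) powr p)"

definition Lp_norm :: "'a measure \<Rightarrow> real \<Rightarrow> ('a \<Rightarrow> complex) \<Rightarrow> real" where
  "Lp_norm M p f = (integral\<^sup>L M (\<lambda>x. norm (f x) powr p)) powr (1 / p)"

definition ae_eq :: "'a measure \<Rightarrow> ('a \<Rightarrow> 'c) \<Rightarrow> ('a \<Rightarrow> 'c) \<Rightarrow> bool" where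
  "ae_eq M f g \<longleftrightarrow> (AE x in M. f x = g x)"

definition Lp_surj_isometry ::
  "'a measure \<Rightarrow> 'b measure \<Rightarrow> real \<Rightarrow> (('a \<Rightarrow> complex) \<Rightarrow> ('b \<Rightarrow> complex)) \<Rightarrow> bool" where
  "Lp_surj_isometry M N p s \<longleftrightarrow>
     (\<forall>f. Lp_fun M p f \<longrightarrow> Lp_fun N p (s f)) \<and>
     (\<forall>f g. Lp_fun M p f \<longrightarrow> Lp_fun M p g \<longrightarrow> ae_eq M f g \<longrightarrow> ae_eq N (s f) (s g)) \<and>
     (\<forall>f g a b. Lp_fun M p f \<longrightarrow> Lp_fun M p g \<longrightarrow>
        ae_eq N (s (\<lambda>x. a * f x + b * g x)) (\<lambda>y. a * s f y + b * s g y)) \<and>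
     (\<forall>f. Lp_fun M p f \<longrightarrow> Lp_norm N p (s f) = Lp_norm M p f) \<and>
     (\<forall>h. Lp_fun N p h \<longrightarrow> (\<exists>f. Lp_fun M p f \<and> ae_eq N (s f) h))"

definition Lp_norm_continuous_path ::
  "'a measure \<Rightarrow> 'b measure \<Rightarrow> real \<Rightarrow> (real \<Rightarrow> ('a \<Rightarrow> complex) \<Rightarrow> ('b \<Rightarrow> complex)) \<Rightarrow> bool" where
  "Lp_norm_continuous_path M N p s \<longleftrightarrow>
     (\<forall>l\<in>{0..1}. \<forall>e>0. \<exists>d>0. \<forall>m\<in>{0..1}. \<bar>m - l\<bar> < d \<longrightarrow>
        (\<forall>f. Lp_fun M p f \<longrightarrow> Lp_norm M p f \<le> 1 \<longrightarrow>
             Lp_norm N p (\<lambda>y. s m f y - s l f y) \<le> e))"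

definition null_equiv :: "'a measure \<Rightarrow> 'a set \<Rightarrow> 'a set \<Rightarrow> bool" where
  "null_equiv M A B \<longleftrightarrow> A \<in> sets M \<and> B \<in> sets M \<and> (A - B) \<union> (B - A) \<in> null_sets M"

text \<open>A bijective measurable set transformation B/N(mu) \<rightarrow> C/N(nu), given on
  representatives: a Boolean algebra homomorphism preserving countable unions.\<close>
definition set_transformation ::
  "'a measure \<Rightarrow> 'b measure \<Rightarrow> ('a set \<Rightarrow> 'b set) \<Rightarrow> bool" where
  "set_transformation M N S \<longleftrightarrow>
     (\<forall>E\<in>sets M. S E \<in> sets N) \<and>
     (\<forall>E F. null_equiv M E F \<longrightarrow> null_equiv N (S E) (S F)) \<and>
     (\<forall>E\<in>sets M. null_equiv N (S (space M - E)) (space N - S E)) \<and>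
     (\<forall>A :: nat \<Rightarrow> 'a set. range A \<subseteq> sets M \<longrightarrow>
        null_equiv N (S (\<Union>i. A i)) (\<Union>i. S (A i))) \<and>
     (\<forall>E\<in>sets M. \<forall>F\<in>sets M. null_equiv N (S E) (S F) \<longrightarrow> null_equiv M E F) \<and>
     (\<forall>F\<in>sets N. \<exists>E\<in>sets M. null_equiv N (S E) F)"

definition induced_map ::
  "'a measure \<Rightarrow> 'b measure \<Rightarrow> ('a set \<Rightarrow> 'b set) \<Rightarrow>
   (('a \<Rightarrow> complex) \<Rightarrow> ('b \<Rightarrow> complex)) \<Rightarrow> bool" where
  "induced_map M N S T \<longleftrightarrow>
     (\<forall>f\<in>borel_measurable M. T f \<in> borel_measurable N) \<and>
     (\<forall>E\<in>sets M. ae_eq N (T (\<lambda>x. indicator E x)) (\<lambda>y. indicator (S E) y)) \<and>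
     (\<forall>f\<in>borel_measurable M. \<forall>g\<in>borel_measurable M. \<forall>a b.
        ae_eq N (T (\<lambda>x. a * f x + b * g x)) (\<lambda>y. a * T f y + b * T g y)) \<and>
     (\<forall>F f. (\<forall>n. F n \<in> borel_measurable M) \<longrightarrow> f \<in> borel_measurable M \<longrightarrow>
        (AE x in M. (\<lambda>n. F n x) \<longlonglongrightarrow> f x) \<longrightarrow>
        (AE y in N. (\<lambda>n. T (F n) y) \<longlonglongrightarrow> T f y))"

text \<open>S is the spatial realization of s: s xi = g (dS_*(mu)/dnu)^(1/p) S_*(xi).
  The Radon--Nikodym derivative h = dS_*(mu)/dnu is characterised by
  S_*(mu)(S E) = mu(E) = integral over S E of h dnu.\<close>
definition spatial_realization ::
  "'a measure \<Rightarrow> 'b measure \<Rightarrow> real \<Rightarrow> (('a \<Rightarrow> complex) \<Rightarrow> ('b \<Rightarrow> complex)) \<Rightarrow>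
   ('a set \<Rightarrow> 'b set) \<Rightarrow> bool" where
  "spatial_realization M N p s S \<longleftrightarrow>
     set_transformation M N S \<and>
     (\<exists>g T h. g \<in> borel_measurable N \<and> (AE y in N. norm (g y) = 1) \<and>
        induced_map M N S T \<and>
        h \<in> borel_measurable N \<and>
        (\<forall>E\<in>sets M. emeasure M E = set_nn_integral N (S E) h) \<and>
        (\<forall>xi. Lp_fun M p xi \<longrightarrow>
           ae_eq N (s xi) (\<lambda>y. g y * complex_of_real (enn2real (h y) powr (1 / p)) * T xi y)))"

end

theory Submission
  imports Defs
begin

(* For p <> 2 the Clarkson-type defect
     clarkson_gap p a b = |a+b|^p + |a-b|^p - 2|a|^p - 2|b|^p
   has a strict sign and vanishes exactly when a = 0 or b = 0.  Integrating it shows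
   that two L^p functions have a.e. disjoint supports iff a norm identity holds, so every
   surjective isometry preserves disjointness of supports in both directions.  From this
   we show that if two surjective isometries are at operator distance at most 1/2, then
   they map each indicator of a finite-measure set to functions with the same support.
   Along a norm continuous path this relation is locally constant, hence constant on the
   connected interval [0,1].  Finally the support of s(chi_E) is S(E) for the spatial
   realization S, because the Radon-Nikodym density is positive and finite on S(E), and
   sigma-finiteness extends S_0(E) = S_1(E) from finite-measure sets to all sets. *)

lemma powr_midpoint_convex:
  fixes x y r :: real
  assumes "r \<ge> 1" "x \<ge> 0" "y \<ge> 0"
  shows "2 * ((x + y) / 2) powr r \<le> x powr r + y powr r"
proof (cases "x = 0 \<or> y = 0")
  case True
  have "2 * (z / 2) powr r \<le> z powr r" if "z \<ge> 0" for z :: real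
  proof -
    have "2 * 1 \<le> (2::real) powr r" using powr_mono[of 1 r 2] assms by simp
    then have "2 * z powr r \<le> 2 powr r * z powr r" by (intro mult_right_mono) auto
    then show ?thesis using that by (simp add: powr_divide field_simps)
  qed
  then show ?thesis using True assms by auto
next
  case False
  then have "x > 0" "y > 0" using assms by auto
  with convex_onD[OF powr_convex[OF assms(1)], of "1/2" x y] show ?thesis
    by (simp add: field_simps)
qed

lemma powr_concave: "0 < r \<Longrightarrow> r \<le> 1 \<Longrightarrow> concave_on {0<..} (\<lambda>x::real. x powr r)"
  by (intro f''_le0_imp_concave derivative_eq_intros | simp)+
     (intro mult_nonpos_nonneg; auto)

lemma powr_midpoint_concave:
  fixes x y r :: real
  assumes "0 < r" "r \<le> 1" "x \<ge> 0" "y \<ge> 0"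
  shows "x powr r + y powr r \<le> 2 * ((x + y) / 2) powr r"
proof (cases "x = 0 \<or> y = 0")
  case True
  have "z powr r \<le> 2 * (z / 2) powr r" if "z \<ge> 0" for z :: real
  proof -
    have "(2::real) powr r \<le> 2 * 1" using powr_mono[of r 1 2] assms by simp
    then have "2 powr r * z powr r \<le> 2 * z powr r" by (intro mult_right_mono) auto
    then show ?thesis using that by (simp add: powr_divide field_simps)
  qed
  then show ?thesis using True assms by auto
next
  case False
  then have "x > 0" "y > 0" using assms by auto
  with concave_onD[OF powr_concave[OF assms(1,2)], of "1/2" x y] show ?thesis
    by (simp add: field_simps)
qed

lemma powr_superadditive:
  fixes u v r :: real
  assumes "u > 0" "v > 0" "r > 1"
  shows "u powr r + v powr r < (u + v) powr r"
proof -
  have split: "z powr r = z * z powr (r - 1)" if "z > 0" for z :: real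
    using that by (simp add: powr_mult_base)
  have "u * u powr (r - 1) < u * (u + v) powr (r - 1)"
    "v * v powr (r - 1) < v * (u + v) powr (r - 1)"
    using assms by (auto intro!: powr_less_mono2)
  then have "u powr r + v powr r < (u + v) * (u + v) powr (r - 1)"
    unfolding split[OF assms(1)] split[OF assms(2)] distrib_right by (rule add_strict_mono)
  also have "\<dots> = (u + v) powr r" using split[of "u + v"] assms by simp
  finally show ?thesis .
qed

lemma powr_subadditive:
  fixes u v r :: real
  assumes "u > 0" "v > 0" "r < 1"
  shows "(u + v) powr r < u powr r + v powr r"
proof -
  have split: "z powr r = z * z powr (r - 1)" if "z > 0" for z :: real
    using that by (simp add: powr_mult_base)
  have "u * (u + v) powr (r - 1) < u * u powr (r - 1)"
    "v * (u + v) powr (r - 1) < v * v powr (r - 1)"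
    using assms by (auto intro!: powr_less_mono2_neg)
  then have "(u + v) * (u + v) powr (r - 1) < u powr r + v powr r"
    unfolding split[OF assms(1)] split[OF assms(2)] distrib_right by (rule add_strict_mono)
  moreover have "(u + v) * (u + v) powr (r - 1) = (u + v) powr r"
    using split[of "u + v"] assms by simp
  ultimately show ?thesis by simp
qed

text \<open>The Clarkson defect.  It vanishes identically for \<open>p = 2\<close> (parallelogram law);
  for \<open>p \<noteq> 2\<close> it detects whether one of its arguments is zero.\<close>

definition clarkson_gap :: "real \<Rightarrow> complex \<Rightarrow> complex \<Rightarrow> real" where
  "clarkson_gap p a b =
     cmod (a + b) powr p + cmod (a - b) powr p - 2 * cmod a powr p - 2 * cmod b powr p"

lemma clarkson_gap_zero: "a = 0 \<or> b = 0 \<Longrightarrow> clarkson_gap p a b = 0"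
  by (auto simp: clarkson_gap_def norm_minus_commute)

lemma powr_as_square_powr:
  assumes "0 \<le> (c::real)" "0 < p"
  shows "c powr p = (c\<^sup>2) powr (p / 2)"
proof (cases "c = 0")
  case False
  then have "c\<^sup>2 = c powr 2" using assms by (simp add: powr_realpow)
  then show ?thesis by (simp add: powr_powr)
qed (use assms in simp)

lemma parallelogram_law: "(cmod (a + b))\<^sup>2 + (cmod (a - b))\<^sup>2 = 2 * ((cmod a)\<^sup>2 + (cmod b)\<^sup>2)"
  unfolding cmod_power2 by (simp add: power2_eq_square algebra_simps)

text \<open>Write \<open>r = p/2\<close>; by the parallelogram law the two squared moduli \<open>|a \<plusminus> b|\<^sup>2\<close> have
  mean \<open>|a|\<^sup>2 + |b|\<^sup>2\<close>, so midpoint convexity and strict superadditivity of \<open>t powr r\<close>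
  combine into a strict sign for \<open>p > 2\<close>, and dually for \<open>p < 2\<close>.\<close>

lemma clarkson_gap_sign:
  assumes "p \<ge> 1" "a \<noteq> 0" "b \<noteq> 0"
  shows "(p > 2 \<longrightarrow> clarkson_gap p a b > 0) \<and> (p < 2 \<longrightarrow> clarkson_gap p a b < 0)"
proof -
  define r where "r = p / 2"
  define x y u v where "x = (cmod (a + b))\<^sup>2" and "y = (cmod (a - b))\<^sup>2"
    and "u = (cmod a)\<^sup>2" and "v = (cmod b)\<^sup>2"
  have gap: "clarkson_gap p a b = x powr r + y powr r - 2 * u powr r - 2 * v powr r"
    using assms(1) unfolding clarkson_gap_def x_def y_def u_def v_def r_def
    by (simp add: powr_as_square_powr[OF norm_ge_zero])
  have pos: "x \<ge> 0" "y \<ge> 0" "u > 0" "v > 0"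
    using assms by (auto simp: x_def y_def u_def v_def)
  have mean: "(x + y) / 2 = u + v"
    using parallelogram_law[of a b] by (simp add: x_def y_def u_def v_def)
  show ?thesis
  proof (intro conjI impI)
    assume "p > 2"
    then have "r > 1" by (simp add: r_def)
    then show "clarkson_gap p a b > 0"
      using powr_midpoint_convex[of r x y] powr_superadditive[of u v r] pos mean gap by simp
  next
    assume "p < 2"
    then have "0 < r" "r < 1" using assms(1) by (auto simp: r_def)
    then show "clarkson_gap p a b < 0"
      using powr_midpoint_concave[of r x y] powr_subadditive[of u v r] pos mean gap by simp
  qed
qed

lemma clarkson_gap_eq_0_iff:
  assumes "p \<ge> 1" "p \<noteq> 2"
  shows "clarkson_gap p a b = 0 \<longleftrightarrow> a = 0 \<or> b = 0"
proof
  assume "clarkson_gap p a b = 0"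
  then show "a = 0 \<or> b = 0"
    using clarkson_gap_sign[OF assms(1), of a b] assms(2) by (cases "p < 2") auto
qed (rule clarkson_gap_zero)

definition Lp_pow :: "'a measure \<Rightarrow> real \<Rightarrow> ('a \<Rightarrow> complex) \<Rightarrow> real" where
  "Lp_pow M p f = integral\<^sup>L M (\<lambda>x. cmod (f x) powr p)"

lemma Lp_fun_measurable[measurable_dest]: "Lp_fun M p f \<Longrightarrow> f \<in> borel_measurable M"
  by (simp add: Lp_fun_def)

lemma Lp_fun_integrable: "Lp_fun M p f \<Longrightarrow> integrable M (\<lambda>x. cmod (f x) powr p)"
  by (simp add: Lp_fun_def)

lemma Lp_pow_nonneg: "Lp_pow M p f \<ge> 0"
  unfolding Lp_pow_def by (intro integral_nonneg_AE) auto

lemma Lp_norm_eq_Lp_pow: "Lp_norm M p f = Lp_pow M p f powr (1 / p)"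
  by (simp add: Lp_norm_def Lp_pow_def)

lemma Lp_pow_eq_Lp_norm_powr: "p > 0 \<Longrightarrow> Lp_pow M p f = Lp_norm M p f powr p"
  by (simp add: Lp_norm_eq_Lp_pow powr_powr Lp_pow_nonneg)

lemma Lp_pow_cong:
  "ae_eq M f g \<Longrightarrow> f \<in> borel_measurable M \<Longrightarrow> g \<in> borel_measurable M \<Longrightarrow> Lp_pow M p f = Lp_pow M p g"
  unfolding Lp_pow_def ae_eq_def by (intro integral_cong_AE) auto

lemma Lp_norm_cong:
  "ae_eq M f g \<Longrightarrow> f \<in> borel_measurable M \<Longrightarrow> g \<in> borel_measurable M \<Longrightarrow> Lp_norm M p f = Lp_norm M p g"
  by (simp add: Lp_norm_eq_Lp_pow Lp_pow_cong)

lemma Lp_fun_dominated: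
  assumes p: "p > 0" and g: "Lp_fun M p g" and f[measurable]: "f \<in> borel_measurable M"
    and bound: "AE x in M. cmod (f x) \<le> cmod (g x)"
  shows "Lp_fun M p f"
proof -
  have "AE x in M. norm (cmod (f x) powr p) \<le> norm (cmod (g x) powr p)"
    using bound by eventually_elim (simp add: p less_imp_le powr_mono2)
  then have "integrable M (\<lambda>x. cmod (f x) powr p)"
    by (intro Bochner_Integration.integrable_bound[OF Lp_fun_integrable[OF g]]) auto
  then show ?thesis by (simp add: Lp_fun_def)
qed

lemma Lp_norm_mono_AE:
  assumes p: "p > 0" and g: "Lp_fun M p g" and f[measurable]: "f \<in> borel_measurable M"
    and bound: "AE x in M. cmod (f x) \<le> cmod (g x)"
  shows "Lp_norm M p f \<le> Lp_norm M p g"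
proof -
  have "Lp_pow M p f \<le> Lp_pow M p g"
    unfolding Lp_pow_def
    using Lp_fun_integrable[OF Lp_fun_dominated[OF assms]] Lp_fun_integrable[OF g] bound
    by (intro integral_mono_AE) (auto elim!: eventually_mono simp: p less_imp_le powr_mono2)
  then show ?thesis
    using p by (simp add: Lp_norm_eq_Lp_pow Lp_pow_nonneg powr_mono2)
qed

lemma Lp_norm_eq_0_imp_AE_zero:
  assumes p: "p > 0" and f: "Lp_fun M p f" and zero: "Lp_norm M p f = 0"
  shows "AE x in M. f x = 0"
proof -
  have "Lp_pow M p f = 0" using zero by (simp add: Lp_norm_eq_Lp_pow)
  then have "AE x in M. cmod (f x) powr p = 0"
    using integral_nonneg_eq_0_iff_AE[OF Lp_fun_integrable[OF f]] by (simp add: Lp_pow_def)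
  then show ?thesis by (auto elim!: AE_mp)
qed

lemma Lp_norm_scale:
  assumes p: "p > 0"
  shows "Lp_norm M p (\<lambda>x. c * f x) = cmod c * Lp_norm M p f"
proof -
  have "Lp_pow M p (\<lambda>x. c * f x) = cmod c powr p * Lp_pow M p f"
    by (simp add: Lp_pow_def norm_mult powr_mult)
  then have "Lp_norm M p (\<lambda>x. c * f x) = (cmod c powr p) powr (1/p) * Lp_norm M p f"
    by (simp add: Lp_norm_eq_Lp_pow powr_mult Lp_pow_nonneg)
  then show ?thesis using p by (simp add: powr_powr)
qed

lemma powr_sum_bound:
  fixes A B C p :: real
  assumes "p > 0" "A \<ge> 0" "B \<ge> 0" "0 \<le> C" "C \<le> A + B"
  shows "C powr p \<le> 2 powr p * (A powr p + B powr p)"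
proof -
  have "C powr p \<le> (2 * max A B) powr p" using assms by (intro powr_mono2) auto
  also have "\<dots> = 2 powr p * max A B powr p" using assms by (simp add: powr_mult)
  also have "\<dots> \<le> 2 powr p * (A powr p + B powr p)" by (simp add: max_def)
  finally show ?thesis .
qed

lemma Lp_fun_lincomb:
  assumes p: "p > 0" and f: "Lp_fun M p f" and g: "Lp_fun M p g"
  shows "Lp_fun M p (\<lambda>x. a * f x + b * g x)"
proof -
  have [measurable]: "f \<in> borel_measurable M" "g \<in> borel_measurable M"
    using f g by (simp_all add: Lp_fun_def)
  define bound where "bound = (\<lambda>x. 2 powr p * (cmod a powr p * cmod (f x) powr p
      + cmod b powr p * cmod (g x) powr p))"
  have "integrable M bound"
    using Lp_fun_integrable[OF f] Lp_fun_integrable[OF g] unfolding bound_def by auto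
  moreover have "norm (cmod (a * f x + b * g x) powr p) \<le> norm (bound x)" for x
  proof -
    have "cmod (a * f x + b * g x) powr p
        \<le> 2 powr p * (cmod (a * f x) powr p + cmod (b * g x) powr p)"
      using p by (intro powr_sum_bound norm_triangle_ineq) auto
    then show ?thesis by (simp add: bound_def norm_mult powr_mult)
  qed
  moreover have "(\<lambda>x. cmod (a * f x + b * g x) powr p) \<in> borel_measurable M" by measurable
  ultimately have "integrable M (\<lambda>x. cmod (a * f x + b * g x) powr p)"
    by (blast intro: Bochner_Integration.integrable_bound[of _ bound] AE_I2)
  then show ?thesis by (simp add: Lp_fun_def)
qed

lemma Lp_fun_add: "p > 0 \<Longrightarrow> Lp_fun M p f \<Longrightarrow> Lp_fun M p g \<Longrightarrow> Lp_fun M p (\<lambda>x. f x + g x)"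
  using Lp_fun_lincomb[of p M f g 1 1] by simp

lemma Lp_fun_diff: "p > 0 \<Longrightarrow> Lp_fun M p f \<Longrightarrow> Lp_fun M p g \<Longrightarrow> Lp_fun M p (\<lambda>x. f x - g x)"
  using Lp_fun_lincomb[of p M f g 1 "-1"] by simp

lemma Lp_fun_scale: "p > 0 \<Longrightarrow> Lp_fun M p f \<Longrightarrow> Lp_fun M p (\<lambda>x. c * f x)"
  using Lp_fun_lincomb[of p M f f c 0] by simp

lemma Lp_fun_indicator:
  assumes "p > 0" "E \<in> sets M" "emeasure M E < \<infinity>"
  shows "Lp_fun M p (indicator E :: _ \<Rightarrow> complex)"
proof -
  have "(\<lambda>x. cmod (indicator E x :: complex) powr p) = indicator E"
    using assms(1) by (auto simp: indicator_def)
  then show ?thesis using assms by (auto simp: Lp_fun_def intro: integrable_real_indicator)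
qed

text \<open>Integrating the Clarkson defect: for \<open>p \<noteq> 2\<close> two \<open>L\<^sup>p\<close> functions have a.e. disjoint
  supports iff \<open>\<parallel>f+g\<parallel>\<^sup>p + \<parallel>f-g\<parallel>\<^sup>p = 2\<parallel>f\<parallel>\<^sup>p + 2\<parallel>g\<parallel>\<^sup>p\<close>, because the defect has constant strict
  sign off the set where one of the functions vanishes.\<close>

lemma clarkson_gap_integral:
  assumes p: "p > 0" and f: "Lp_fun M p f" and g: "Lp_fun M p g"
  shows "integrable M (\<lambda>x. clarkson_gap p (f x) (g x))"
    and "integral\<^sup>L M (\<lambda>x. clarkson_gap p (f x) (g x)) =
      Lp_pow M p (\<lambda>x. f x + g x) + Lp_pow M p (\<lambda>x. f x - g x) - 2 * Lp_pow M p f - 2 * Lp_pow M p g"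
proof -
  note ints = Lp_fun_integrable[OF Lp_fun_add[OF p f g]] Lp_fun_integrable[OF Lp_fun_diff[OF p f g]]
    Lp_fun_integrable[OF f] Lp_fun_integrable[OF g]
  show "integrable M (\<lambda>x. clarkson_gap p (f x) (g x))"
    unfolding clarkson_gap_def using ints by auto
  show "integral\<^sup>L M (\<lambda>x. clarkson_gap p (f x) (g x)) =
      Lp_pow M p (\<lambda>x. f x + g x) + Lp_pow M p (\<lambda>x. f x - g x) - 2 * Lp_pow M p f - 2 * Lp_pow M p g"
    unfolding clarkson_gap_def Lp_pow_def using ints by simp
qed

lemma AE_disjoint_iff_clarkson_integral:
  assumes p: "p \<ge> 1" "p \<noteq> 2" and f: "Lp_fun M p f" and g: "Lp_fun M p g"
  shows "(AE x in M. f x = 0 \<or> g x = 0) \<longleftrightarrow> integral\<^sup>L M (\<lambda>x. clarkson_gap p (f x) (g x)) = 0"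
proof -
  have int: "integrable M (\<lambda>x. clarkson_gap p (f x) (g x))"
    using clarkson_gap_integral(1)[OF _ f g] p by simp
  have "\<exists>\<sigma>::real. \<sigma> \<noteq> 0 \<and> (\<forall>a b. \<sigma> * clarkson_gap p a b \<ge> 0)"
  proof (cases "p < 2")
    case True
    have "(-1) * clarkson_gap p a b \<ge> 0" for a b
      using clarkson_gap_sign[OF p(1), of a b] clarkson_gap_zero[of a b p] True
      by (cases "a = 0 \<or> b = 0") auto
    then show ?thesis by (intro exI[of _ "-1"]) simp
  next
    case False
    have "1 * clarkson_gap p a b \<ge> 0" for a b
      using clarkson_gap_sign[OF p(1), of a b] clarkson_gap_zero[of a b p] False p(2)
      by (cases "a = 0 \<or> b = 0") auto
    then show ?thesis by (intro exI[of _ 1]) simp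
  qed
  then obtain \<sigma> :: real where \<sigma>: "\<sigma> \<noteq> 0" "\<And>a b. \<sigma> * clarkson_gap p a b \<ge> 0"
    by blast
  have "integral\<^sup>L M (\<lambda>x. clarkson_gap p (f x) (g x)) = 0 \<longleftrightarrow>
      integral\<^sup>L M (\<lambda>x. \<sigma> * clarkson_gap p (f x) (g x)) = 0"
    using \<sigma>(1) by simp
  also have "\<dots> \<longleftrightarrow> (AE x in M. \<sigma> * clarkson_gap p (f x) (g x) = 0)"
    using \<sigma>(2) int by (intro integral_nonneg_eq_0_iff_AE) auto
  also have "\<dots> \<longleftrightarrow> (AE x in M. f x = 0 \<or> g x = 0)"
    using \<sigma>(1) by (simp add: clarkson_gap_eq_0_iff[OF p])
  finally show ?thesis ..
qed

locale Lp_isometry =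
  fixes M :: "'a measure" and N :: "'b measure" and p :: real
    and s :: "('a \<Rightarrow> complex) \<Rightarrow> ('b \<Rightarrow> complex)"
  assumes isometry: "Lp_surj_isometry M N p s" and p_ge_1: "p \<ge> 1"
begin

lemma p_pos: "p > 0"
  using p_ge_1 by simp

lemma Lp_fun_image: "Lp_fun M p f \<Longrightarrow> Lp_fun N p (s f)"
  using isometry by (simp add: Lp_surj_isometry_def)

lemma respects_ae: "Lp_fun M p f \<Longrightarrow> Lp_fun M p g \<Longrightarrow> ae_eq M f g \<Longrightarrow> ae_eq N (s f) (s g)"
  using isometry by (simp add: Lp_surj_isometry_def)

lemma linear:
  "Lp_fun M p f \<Longrightarrow> Lp_fun M p g \<Longrightarrow> ae_eq N (s (\<lambda>x. a * f x + b * g x)) (\<lambda>y. a * s f y + b * s g y)"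
  using isometry by (simp add: Lp_surj_isometry_def)

lemma norm_preserving: "Lp_fun M p f \<Longrightarrow> Lp_norm N p (s f) = Lp_norm M p f"
  using isometry by (simp add: Lp_surj_isometry_def)

lemma surjective: "Lp_fun N p h \<Longrightarrow> \<exists>f. Lp_fun M p f \<and> ae_eq N (s f) h"
  using isometry by (simp add: Lp_surj_isometry_def)

lemma additive: "Lp_fun M p f \<Longrightarrow> Lp_fun M p g \<Longrightarrow> AE y in N. s (\<lambda>x. f x + g x) y = s f y + s g y"
  using linear[of f g 1 1] by (simp add: ae_eq_def)

lemma homogeneous: "Lp_fun M p f \<Longrightarrow> AE y in N. s (\<lambda>x. c * f x) y = c * s f y"
  using linear[of f f c 0] by (simp add: ae_eq_def)

lemma Lp_pow_lincomb:
  assumes f: "Lp_fun M p f" and g: "Lp_fun M p g"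
  shows "Lp_pow N p (\<lambda>y. a * s f y + b * s g y) = Lp_pow M p (\<lambda>x. a * f x + b * g x)"
proof -
  have fg: "Lp_fun M p (\<lambda>x. a * f x + b * g x)" by (rule Lp_fun_lincomb[OF p_pos f g])
  have "Lp_pow N p (\<lambda>y. a * s f y + b * s g y) = Lp_pow N p (s (\<lambda>x. a * f x + b * g x))"
    using linear[OF f g, of a b] Lp_fun_image[OF fg] Lp_fun_image[OF f] Lp_fun_image[OF g]
    by (intro Lp_pow_cong) (auto simp: ae_eq_def elim: AE_mp)
  also have "\<dots> = Lp_pow M p (\<lambda>x. a * f x + b * g x)"
    using norm_preserving[OF fg] p_pos by (simp add: Lp_pow_eq_Lp_norm_powr)
  finally show ?thesis .
qed

text \<open>Being expressed through norms of linear combinations, the integrated Clarkson defect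
  is preserved; hence so is a.e. disjointness of supports, in both directions.\<close>

lemma clarkson_integral_preserved:
  assumes f: "Lp_fun M p f" and g: "Lp_fun M p g"
  shows "integral\<^sup>L N (\<lambda>y. clarkson_gap p (s f y) (s g y)) = integral\<^sup>L M (\<lambda>x. clarkson_gap p (f x) (g x))"
  using clarkson_gap_integral(2)[OF p_pos f g] clarkson_gap_integral(2)[OF p_pos Lp_fun_image[OF f] Lp_fun_image[OF g]]
    Lp_pow_lincomb[OF f g, of 1 1] Lp_pow_lincomb[OF f g, of 1 "-1"]
    Lp_pow_lincomb[OF f g, of 1 0] Lp_pow_lincomb[OF f g, of 0 1]
  by simp

lemma disjointness_preserved:
  assumes "p \<noteq> 2" and f: "Lp_fun M p f" and g: "Lp_fun M p g"
  shows "(AE x in M. f x = 0 \<or> g x = 0) \<longleftrightarrow> (AE y in N. s f y = 0 \<or> s g y = 0)"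
  using AE_disjoint_iff_clarkson_integral[OF p_ge_1 assms(1) f g]
    AE_disjoint_iff_clarkson_integral[OF p_ge_1 assms(1) Lp_fun_image[OF f] Lp_fun_image[OF g]]
    clarkson_integral_preserved[OF f g]
  by simp

lemma injective_ae:
  assumes f: "Lp_fun M p f" and g: "Lp_fun M p g" and eq: "ae_eq N (s f) (s g)"
  shows "ae_eq M f g"
proof -
  have "Lp_pow M p (\<lambda>x. f x - g x) = Lp_pow N p (\<lambda>y. s f y - s g y)"
    using Lp_pow_lincomb[OF f g, of 1 "-1"] by simp
  also have "\<dots> = Lp_pow N p (\<lambda>y. 0)"
    using eq Lp_fun_image[OF f] Lp_fun_image[OF g]
    by (intro Lp_pow_cong) (auto simp: ae_eq_def elim!: AE_mp)
  finally have "Lp_norm M p (\<lambda>x. f x - g x) = 0"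
    using p_pos by (simp add: Lp_pow_def Lp_norm_eq_Lp_pow)
  then show ?thesis
    using Lp_norm_eq_0_imp_AE_zero[OF p_pos Lp_fun_diff[OF p_pos f g]]
    by (auto simp: ae_eq_def elim!: AE_mp)
qed

end

text \<open>Disjointness preservation turns an isometry into a map of "bands": any piece
  \<open>s(\<chi>\<^sub>E)\<cdot>\<chi>\<^sub>G\<close> of the image of an indicator is itself the image of an indicator \<open>\<chi>\<^sub>F\<close> with
  \<open>F \<subseteq> E\<close>.  Indeed, write \<open>s(\<chi>\<^sub>E)\<close> as a sum of the two disjointly supported pieces on
  \<open>G\<close> and off \<open>G\<close>; their preimages \<open>f, f'\<close> are disjointly supported and sum to \<open>\<chi>\<^sub>E\<close>,
  so \<open>f\<close> is the indicator of \<open>F = {f \<noteq> 0} \<inter> E\<close>.\<close>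

context Lp_isometry
begin

lemma indicator_band_preimage:
  assumes p2: "p \<noteq> 2" and E: "E \<in> sets M" "emeasure M E < \<infinity>" and G[measurable]: "G \<in> sets N"
  obtains F where "F \<in> sets M" "F \<subseteq> E"
    "AE y in N. s (indicator F) y = s (indicator E) y * indicator G y"
proof -
  define a where "a = s (indicator E)"
  have LE: "Lp_fun M p (indicator E :: _ \<Rightarrow> complex)" by (rule Lp_fun_indicator[OF p_pos E])
  have La: "Lp_fun N p a" unfolding a_def by (rule Lp_fun_image[OF LE])
  then have [measurable]: "a \<in> borel_measurable N" by (simp add: Lp_fun_def)
  have "Lp_fun N p (\<lambda>y. a y * indicator G y)" "Lp_fun N p (\<lambda>y. a y * indicator (space N - G) y)"
    by (auto intro!: Lp_fun_dominated[OF p_pos La] AE_I2 simp: indicator_def)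
  then obtain f f' where f: "Lp_fun M p f" "AE y in N. s f y = a y * indicator G y"
    and f': "Lp_fun M p f'" "AE y in N. s f' y = a y * indicator (space N - G) y"
    using surjective by (auto simp: ae_eq_def) metis
  have "AE y in N. s (\<lambda>x. f x + f' x) y = s (indicator E) y"
    using additive[OF f(1) f'(1)] f(2) f'(2) AE_space
    by eventually_elim (auto simp: a_def indicator_def)
  then have sum: "AE x in M. f x + f' x = indicator E x"
    using injective_ae[OF Lp_fun_add[OF p_pos f(1) f'(1)] LE] by (simp add: ae_eq_def)
  have "AE y in N. s f y = 0 \<or> s f' y = 0"
    using f(2) f'(2) by eventually_elim (auto simp: indicator_def)
  then have disj: "AE x in M. f x = 0 \<or> f' x = 0"
    using disjointness_preserved[OF p2 f(1) f'(1)] by simp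
  define F where "F = {x \<in> space M. f x \<noteq> 0} \<inter> E"
  have F: "F \<in> sets M" "F \<subseteq> E"
    using f(1) E by (auto simp: F_def Lp_fun_def)
  then have LF: "Lp_fun M p (indicator F :: _ \<Rightarrow> complex)"
    using E emeasure_mono[of F E M] by (intro Lp_fun_indicator[OF p_pos]) auto
  have "AE x in M. f x = indicator F x"
    using sum disj AE_space by eventually_elim (auto simp: F_def indicator_def split: if_splits)
  then have "AE y in N. s (indicator F) y = s f y"
    using respects_ae[OF LF f(1)] by (auto simp: ae_eq_def eq_commute)
  then have "AE y in N. s (indicator F) y = s (indicator E) y * indicator G y"
    using f(2) by eventually_elim (simp add: a_def)
  with F show ?thesis by (rule that)
qed

text \<open>Monotonicity of supports: for \<open>F \<subseteq> E\<close>, \<open>s(\<chi>\<^sub>E) = s(\<chi>\<^sub>F) + s(\<chi>\<^sub>E\<^sub>-\<^sub>F)\<close> is a sum of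
  disjointly supported functions, so \<open>s(\<chi>\<^sub>F)\<close> vanishes wherever \<open>s(\<chi>\<^sub>E)\<close> does.\<close>

lemma indicator_support_mono:
  assumes p2: "p \<noteq> 2" and E: "E \<in> sets M" "emeasure M E < \<infinity>" and F: "F \<in> sets M" "F \<subseteq> E"
  shows "AE y in N. s (indicator E) y = 0 \<longrightarrow> s (indicator F) y = 0"
proof -
  have fin: "emeasure M F < \<infinity>" "emeasure M (E - F) < \<infinity>"
    using E F emeasure_mono[of F E M] emeasure_mono[of "E - F" E M] by auto
  have LF: "Lp_fun M p (indicator F :: _ \<Rightarrow> complex)"
    and LEF: "Lp_fun M p (indicator (E - F) :: _ \<Rightarrow> complex)"
    using Lp_fun_indicator[OF p_pos F(1) fin(1)] Lp_fun_indicator[OF p_pos _ fin(2)] E F by auto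
  have "AE x in M. (indicator F x :: complex) = 0 \<or> (indicator (E - F) x :: complex) = 0"
    by (rule AE_I2) (auto simp: indicator_def)
  then have disj: "AE y in N. s (indicator F) y = 0 \<or> s (indicator (E - F)) y = 0"
    using disjointness_preserved[OF p2 LF LEF] by simp
  have "(\<lambda>x. indicator F x + indicator (E - F) x :: complex) = indicator E"
    using F by (auto simp: indicator_def fun_eq_iff)
  then have "AE y in N. s (indicator E) y = s (indicator F) y + s (indicator (E - F)) y"
    using additive[OF LF LEF] by simp
  with disj show ?thesis by eventually_elim auto
qed

end

lemma operator_bound_rescale:
  assumes l: "Lp_isometry M N p sl" and m: "Lp_isometry M N p sm"
    and bound: "\<forall>f. Lp_fun M p f \<longrightarrow> Lp_norm M p f \<le> 1 \<longrightarrow> Lp_norm N p (\<lambda>y. sm f y - sl f y) \<le> e"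
    and f: "Lp_fun M p f" and pos: "Lp_norm M p f > 0"
  shows "Lp_norm N p (\<lambda>y. sm f y - sl f y) \<le> e * Lp_norm M p f"
proof -
  interpret L: Lp_isometry M N p sl by fact
  interpret R: Lp_isometry M N p sm by fact
  define r where "r = Lp_norm M p f"
  define c where "c = complex_of_real (1 / r)"
  have r: "r > 0" using pos by (simp add: r_def)
  have c: "cmod c = 1 / r" using r by (simp add: c_def norm_divide)
  have Lxi: "Lp_fun M p (\<lambda>x. c * f x)" by (rule Lp_fun_scale[OF L.p_pos f])
  have "Lp_norm M p (\<lambda>x. c * f x) = 1"
    using r c by (simp add: Lp_norm_scale[OF L.p_pos] r_def)
  then have "Lp_norm N p (\<lambda>y. sm (\<lambda>x. c * f x) y - sl (\<lambda>x. c * f x) y) \<le> e"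
    using bound Lxi by simp
  moreover have "Lp_norm N p (\<lambda>y. sm (\<lambda>x. c * f x) y - sl (\<lambda>x. c * f x) y)
      = Lp_norm N p (\<lambda>y. c * (sm f y - sl f y))"
    using R.homogeneous[OF f, of c] L.homogeneous[OF f, of c]
      Lp_fun_measurable[OF R.Lp_fun_image[OF Lxi]] Lp_fun_measurable[OF L.Lp_fun_image[OF Lxi]]
      Lp_fun_measurable[OF R.Lp_fun_image[OF f]] Lp_fun_measurable[OF L.Lp_fun_image[OF f]]
    by (intro Lp_norm_cong) (auto simp: ae_eq_def right_diff_distrib elim!: AE_mp)
  moreover have "\<dots> = Lp_norm N p (\<lambda>y. sm f y - sl f y) / r"
    using c by (simp add: Lp_norm_scale[OF L.p_pos])
  ultimately show ?thesis using r by (simp add: r_def divide_le_eq mult.commute)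
qed

text \<open>Stability of supports: if two surjective isometries are at operator distance at most
  \<open>1/2\<close>, the support of \<open>sl(\<chi>\<^sub>E)\<close> is contained in that of \<open>sm(\<chi>\<^sub>E)\<close>.  Otherwise cut
  \<open>sl(\<chi>\<^sub>E)\<close> down to the non-null set \<open>G\<close> where \<open>sm(\<chi>\<^sub>E)\<close> vanishes, obtaining \<open>sl(\<chi>\<^sub>F)\<close>;
  since \<open>sm(\<chi>\<^sub>F)\<close> vanishes on \<open>G\<close>, \<open>\<parallel>\<chi>\<^sub>F\<parallel> = \<parallel>sl(\<chi>\<^sub>F)\<parallel> \<le> \<parallel>(sm - sl)\<chi>\<^sub>F\<parallel> \<le> \<parallel>\<chi>\<^sub>F\<parallel>/2\<close>,
  forcing \<open>sl(\<chi>\<^sub>F) = 0\<close> and \<open>G\<close> null.\<close>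

lemma support_stable:
  assumes l: "Lp_isometry M N p sl" and m: "Lp_isometry M N p sm" and p2: "p \<noteq> 2"
    and close: "\<forall>f. Lp_fun M p f \<longrightarrow> Lp_norm M p f \<le> 1 \<longrightarrow> Lp_norm N p (\<lambda>y. sm f y - sl f y) \<le> 1/2"
    and E: "E \<in> sets M" "emeasure M E < \<infinity>"
  shows "AE y in N. sl (indicator E) y \<noteq> 0 \<longrightarrow> sm (indicator E) y \<noteq> 0"
proof (rule ccontr)
  interpret L: Lp_isometry M N p sl by fact
  interpret R: Lp_isometry M N p sm by fact
  have LE: "Lp_fun M p (indicator E :: _ \<Rightarrow> complex)" by (rule Lp_fun_indicator[OF L.p_pos E])
  have [measurable]: "sl (indicator E) \<in> borel_measurable N" "sm (indicator E) \<in> borel_measurable N"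
    using L.Lp_fun_image[OF LE] R.Lp_fun_image[OF LE] by (simp_all add: Lp_fun_def)
  define G where "G = {y \<in> space N. sl (indicator E) y \<noteq> 0 \<and> sm (indicator E) y = 0}"
  have G[measurable]: "G \<in> sets N" unfolding G_def by measurable
  assume not_AE: "\<not> (AE y in N. sl (indicator E) y \<noteq> 0 \<longrightarrow> sm (indicator E) y \<noteq> 0)"
  have G_not_null: "G \<notin> null_sets N"
  proof
    assume "G \<in> null_sets N"
    then have "AE y in N. y \<notin> G" by (rule AE_not_in)
    then have "AE y in N. sl (indicator E) y \<noteq> 0 \<longrightarrow> sm (indicator E) y \<noteq> 0"
      using AE_space by eventually_elim (auto simp: G_def)
    with not_AE show False by simp
  qed
  obtain F where F: "F \<in> sets M" "F \<subseteq> E"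
    and slF: "AE y in N. sl (indicator F) y = sl (indicator E) y * indicator G y"
    using L.indicator_band_preimage[OF p2 E G] by blast
  have LF: "Lp_fun M p (indicator F :: _ \<Rightarrow> complex)"
    using E F emeasure_mono[of F E M] by (intro Lp_fun_indicator[OF L.p_pos]) auto
  have LsF: "Lp_fun N p (sl (indicator F))" "Lp_fun N p (sm (indicator F))"
    using L.Lp_fun_image[OF LF] R.Lp_fun_image[OF LF] by auto
  have "AE y in N. cmod (sl (indicator F) y) \<le> cmod (sm (indicator F) y - sl (indicator F) y)"
    using slF R.indicator_support_mono[OF p2 E F] AE_space
    by eventually_elim (auto simp: G_def indicator_def)
  then have "Lp_norm N p (sl (indicator F)) \<le> Lp_norm N p (\<lambda>y. sm (indicator F) y - sl (indicator F) y)"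
    using LsF by (intro Lp_norm_mono_AE[OF L.p_pos Lp_fun_diff[OF L.p_pos]]) auto
  moreover have "Lp_norm M p (indicator F :: _ \<Rightarrow> complex) \<ge> 0"
    by (simp add: Lp_norm_def)
  ultimately have "Lp_norm M p (indicator F :: _ \<Rightarrow> complex) = 0"
    using operator_bound_rescale[OF l m close LF] L.norm_preserving[OF LF] by force
  then have "AE y in N. sl (indicator F) y = 0"
    using L.norm_preserving[OF LF] by (intro Lp_norm_eq_0_imp_AE_zero[OF L.p_pos LsF(1)]) simp
  then have "AE y in N. y \<notin> G"
    using slF by eventually_elim (auto simp: G_def)
  then show False
    using G_not_null AE_iff_null_sets[OF G] by simp
qed

lemma null_equiv_AE: "null_equiv N X Y \<Longrightarrow> AE y in N. y \<in> X \<longleftrightarrow> y \<in> Y"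
  unfolding null_equiv_def by (auto dest!: AE_not_in elim!: AE_mp)

lemma AE_imp_null_equiv:
  assumes X: "X \<in> sets N" and Y: "Y \<in> sets N" and ae: "AE y in N. y \<in> X \<longleftrightarrow> y \<in> Y"
  shows "null_equiv N X Y"
proof -
  have "(X - Y) \<union> (Y - X) \<in> sets N" using X Y by auto
  moreover have "AE y in N. y \<notin> (X - Y) \<union> (Y - X)" using ae by (auto elim!: AE_mp)
  ultimately show ?thesis unfolding null_equiv_def using AE_iff_null_sets X Y by blast
qed

text \<open>A set transformation maps the empty set to a null set: with \<open>X, Y\<close> the two spaces,
  \<open>S(\<emptyset>) \<union> S(X) \<sim> S(X) = S(X - \<emptyset>) \<sim> Y - S(\<emptyset>)\<close>.\<close>

lemma set_transformation_empty_null: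
  assumes ST: "set_transformation M N S"
  shows "S {} \<in> null_sets N"
proof -
  define A where "A = (\<lambda>i::nat. if i = 0 then {} else space M)"
  have "range A \<subseteq> sets M" "(\<Union>i. A i) = space M" "(\<Union>i. S (A i)) = S {} \<union> S (space M)"
    by (auto simp: A_def split: if_splits)
  then have union: "null_equiv N (S (space M)) (S {} \<union> S (space M))"
    using ST unfolding set_transformation_def by metis
  have compl: "null_equiv N (S (space M - {})) (space N - S {})"
    using ST unfolding set_transformation_def by blast
  have "AE y in N. y \<notin> S {}"
    using null_equiv_AE[OF union] null_equiv_AE[OF compl] AE_space by eventually_elim auto
  moreover have "S {} \<in> sets N" using ST unfolding set_transformation_def by auto
  ultimately show ?thesis using AE_iff_null_sets by blast
qed

text \<open>If \<open>\<mu>(E) = \<integral>\<^sub>S\<^sub>(\<^sub>E\<^sub>) h d\<nu>\<close> for all \<open>E\<close>, then on the image of a finite-measure set the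
  density \<open>h\<close> is finite a.e. (finite integral) and positive a.e.: the set where it vanishes
  is the image of a set of measure zero, hence null.\<close>

lemma density_pos_finite_on_image:
  assumes ST: "set_transformation M N S" and h[measurable]: "h \<in> borel_measurable N"
    and hS: "\<forall>E\<in>sets M. emeasure M E = set_nn_integral N (S E) h"
    and E: "E \<in> sets M" "emeasure M E < \<infinity>"
  shows "AE y in N. y \<in> S E \<longrightarrow> 0 < h y \<and> h y < \<infinity>"
proof -
  have SE[measurable]: "S E \<in> sets N" using ST E unfolding set_transformation_def by auto
  have "set_nn_integral N (S E) h \<noteq> \<infinity>" using hS E by auto
  then have finite: "AE y in N. h y * indicator (S E) y \<noteq> \<infinity>"
    by (intro nn_integral_noteq_infinite) auto
  define K where "K = {y \<in> space N. y \<in> S E \<and> h y = 0}"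
  have K[measurable]: "K \<in> sets N" unfolding K_def by measurable
  obtain E' where E': "E' \<in> sets M" "null_equiv N (S E') K"
    using ST K unfolding set_transformation_def by blast
  have "emeasure M E' = set_nn_integral N (S E') h" using hS E' by auto
  also have "\<dots> = set_nn_integral N K h"
    using null_equiv_AE[OF E'(2)] by (intro nn_integral_cong_AE) (auto simp: indicator_def)
  also have "\<dots> = 0"
  proof -
    have "(\<lambda>y. h y * indicator K y) = (\<lambda>y. 0)" by (auto simp: K_def indicator_def fun_eq_iff)
    then show ?thesis by simp
  qed
  finally have "null_equiv M E' {}" using E' by (auto simp: null_equiv_def)
  then have E'_empty: "null_equiv N (S E') (S {})"
    using ST unfolding set_transformation_def by blast
  have "AE y in N. y \<notin> K"
    using null_equiv_AE[OF E'(2)] null_equiv_AE[OF E'_empty]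
      AE_not_in[OF set_transformation_empty_null[OF ST]]
    by eventually_elim auto
  then show ?thesis
    using finite AE_space by eventually_elim (auto simp: K_def top.not_eq_extremum zero_less_iff_neq_zero)
qed

text \<open>Hence, with \<open>|g| = 1\<close>, the function \<open>s(\<chi>\<^sub>E) = g\<cdot>h\<^sup>1\<^sup>/\<^sup>p\<cdot>\<chi>\<^sub>S\<^sub>(\<^sub>E\<^sub>)\<close> has support exactly \<open>S(E)\<close>.\<close>

lemma spatial_realization_indicator_support:
  assumes p: "p \<ge> 1" and SR: "spatial_realization M N p s S"
    and E: "E \<in> sets M" "emeasure M E < \<infinity>"
  shows "AE y in N. s (indicator E) y \<noteq> 0 \<longleftrightarrow> y \<in> S E"
proof -
  have ST: "set_transformation M N S" using SR by (simp add: spatial_realization_def)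
  obtain g T h where g: "AE y in N. norm (g y) = 1"
    and T: "induced_map M N S T" and h: "h \<in> borel_measurable N"
    and hS: "\<forall>E\<in>sets M. emeasure M E = set_nn_integral N (S E) h"
    and rep: "\<forall>xi. Lp_fun M p xi \<longrightarrow>
      ae_eq N (s xi) (\<lambda>y. g y * complex_of_real (enn2real (h y) powr (1 / p)) * T xi y)"
    using SR unfolding spatial_realization_def by blast
  have "AE y in N. T (indicator E) y = indicator (S E) y"
    using T E unfolding induced_map_def ae_eq_def by auto
  moreover have "AE y in N. s (indicator E) y =
      g y * complex_of_real (enn2real (h y) powr (1 / p)) * T (indicator E) y"
    using rep Lp_fun_indicator[OF _ E] p unfolding ae_eq_def by auto
  ultimately show ?thesis
    using g density_pos_finite_on_image[OF ST h hS E]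
    by eventually_elim (auto simp: indicator_def enn2real_eq_0_iff)
qed

definition same_indicator_supports ::
  "'a measure \<Rightarrow> 'b measure \<Rightarrow> (('a \<Rightarrow> complex) \<Rightarrow> ('b \<Rightarrow> complex)) \<Rightarrow>
   (('a \<Rightarrow> complex) \<Rightarrow> ('b \<Rightarrow> complex)) \<Rightarrow> bool" where
  "same_indicator_supports M N s t \<longleftrightarrow> (\<forall>E\<in>sets M. emeasure M E < \<infinity> \<longrightarrow>
     (AE y in N. s (indicator E) y \<noteq> 0 \<longleftrightarrow> t (indicator E) y \<noteq> 0))"

lemma same_indicator_supports_sym:
  "same_indicator_supports M N s t \<Longrightarrow> same_indicator_supports M N t s"
  unfolding same_indicator_supports_def by (auto elim!: eventually_mono)

lemma same_indicator_supports_trans: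
  "same_indicator_supports M N s t \<Longrightarrow> same_indicator_supports M N t u \<Longrightarrow>
   same_indicator_supports M N s u"
  unfolding same_indicator_supports_def by (fastforce elim: eventually_elim2)

lemma same_indicator_supports_if_close:
  assumes l: "Lp_isometry M N p sl" and m: "Lp_isometry M N p sm" and p2: "p \<noteq> 2"
    and close: "\<forall>f. Lp_fun M p f \<longrightarrow> Lp_norm M p f \<le> 1 \<longrightarrow> Lp_norm N p (\<lambda>y. sm f y - sl f y) \<le> 1/2"
  shows "same_indicator_supports M N sl sm"
proof -
  have "Lp_norm N p (\<lambda>y. sl f y - sm f y) = Lp_norm N p (\<lambda>y. sm f y - sl f y)" for f
    by (simp add: Lp_norm_def norm_minus_commute)
  with close have close': "\<forall>f. Lp_fun M p f \<longrightarrow> Lp_norm M p f \<le> 1 \<longrightarrow>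
      Lp_norm N p (\<lambda>y. sl f y - sm f y) \<le> 1/2"
    by simp
  show ?thesis unfolding same_indicator_supports_def
  proof (intro ballI impI)
    fix E assume E: "E \<in> sets M" "emeasure M E < \<infinity>"
    show "AE y in N. sl (indicator E) y \<noteq> 0 \<longleftrightarrow> sm (indicator E) y \<noteq> 0"
      using support_stable[OF l m p2 close E] support_stable[OF m l p2 close' E]
      by eventually_elim auto
  qed
qed

text \<open>Along a norm continuous path of surjective isometries, having the same indicator
  supports is an equivalence relation that holds locally, hence on all of the connected
  interval \<open>[0,1]\<close>.\<close>

lemma path_same_indicator_supports:
  assumes p: "p \<ge> 1" "p \<noteq> 2"
    and iso: "\<forall>l\<in>{0..1}. Lp_surj_isometry M N p (s l)"
    and cont: "Lp_norm_continuous_path M N p s"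
  shows "same_indicator_supports M N (s 0) (s 1)"
proof (rule connected_equivalence_relation[of "{0..1::real}"])
  show "connected {0..1::real}" "(0::real) \<in> {0..1}" "(1::real) \<in> {0..1}" by auto
  show "same_indicator_supports M N (s y) (s x)"
    if "same_indicator_supports M N (s x) (s y)" for x y
    using that by (rule same_indicator_supports_sym)
  show "same_indicator_supports M N (s x) (s z)"
    if "same_indicator_supports M N (s x) (s y)" "same_indicator_supports M N (s y) (s z)" for x y z
    using that by (rule same_indicator_supports_trans)
next
  fix l :: real assume l: "l \<in> {0..1}"
  have "\<forall>e>0. \<exists>d>0. \<forall>m\<in>{0..1}. \<bar>m - l\<bar> < d \<longrightarrow>
      (\<forall>f. Lp_fun M p f \<longrightarrow> Lp_norm M p f \<le> 1 \<longrightarrow> Lp_norm N p (\<lambda>y. s m f y - s l f y) \<le> e)"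
    using cont l unfolding Lp_norm_continuous_path_def by blast
  then obtain d where d: "d > 0" and near: "\<forall>m\<in>{0..1}. \<bar>m - l\<bar> < d \<longrightarrow>
      (\<forall>f. Lp_fun M p f \<longrightarrow> Lp_norm M p f \<le> 1 \<longrightarrow> Lp_norm N p (\<lambda>y. s m f y - s l f y) \<le> 1/2)"
    by (metis half_gt_zero zero_less_one)
  have "same_indicator_supports M N (s l) (s m)" if m: "m \<in> {0..1} \<inter> ball l d" for m
  proof (rule same_indicator_supports_if_close[OF _ _ p(2)])
    show "Lp_isometry M N p (s l)" "Lp_isometry M N p (s m)"
      using iso l m p(1) by (auto simp: Lp_isometry_def)
    show "\<forall>f. Lp_fun M p f \<longrightarrow> Lp_norm M p f \<le> 1 \<longrightarrow> Lp_norm N p (\<lambda>y. s m f y - s l f y) \<le> 1/2"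
      using near m by (auto simp: dist_real_def abs_minus_commute)
  qed
  moreover have "openin (top_of_set {0..1}) ({0..1} \<inter> ball l d)"
    by (intro openin_open_Int) auto
  ultimately show "\<exists>T. openin (top_of_set {0..1}) T \<and> l \<in> T \<and>
      (\<forall>m\<in>T. same_indicator_supports M N (s l) (s m))"
    using l d by (intro exI[of _ "{0..1} \<inter> ball l d"]) auto
qed

text \<open>By sigma-finiteness every measurable set is a countable union of finite-measure
  pieces, and set transformations preserve countable unions; so two of them agreeing on
  finite-measure sets agree everywhere.\<close>

lemma set_transformations_agree:
  assumes "sigma_finite_measure M"
    and ST0: "set_transformation M N S0" and ST1: "set_transformation M N S1"
    and agree: "\<And>B. B \<in> sets M \<Longrightarrow> emeasure M B < \<infinity> \<Longrightarrow> AE y in N. y \<in> S0 B \<longleftrightarrow> y \<in> S1 B"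
    and E: "E \<in> sets M"
  shows "null_equiv N (S0 E) (S1 E)"
proof -
  interpret sigma_finite_measure M by fact
  obtain A :: "nat \<Rightarrow> 'a set" where A: "range A \<subseteq> sets M" "(\<Union>i. A i) = space M"
      "\<And>i. emeasure M (A i) \<noteq> \<infinity>"
    using sigma_finite by blast
  define B where "B i = E \<inter> A i" for i
  have B: "range B \<subseteq> sets M" using A E by (auto simp: B_def)
  have B_finite: "emeasure M (B i) < \<infinity>" for i
  proof -
    have "emeasure M (B i) \<le> emeasure M (A i)" using A by (intro emeasure_mono) (auto simp: B_def)
    then show ?thesis using A(3)[of i] by (simp add: less_top le_less_trans)
  qed
  have E_union: "E = (\<Union>i. B i)" using A(2) sets.sets_into_space[OF E] by (auto simp: B_def)
  have union0: "null_equiv N (S0 E) (\<Union>i. S0 (B i))"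
    and union1: "null_equiv N (S1 E) (\<Union>i. S1 (B i))"
    using ST0 ST1 B unfolding set_transformation_def E_union by blast+
  have "AE y in N. \<forall>i. y \<in> S0 (B i) \<longleftrightarrow> y \<in> S1 (B i)"
    unfolding AE_all_countable using agree B B_finite by auto
  then have "AE y in N. y \<in> S0 E \<longleftrightarrow> y \<in> S1 E"
    using null_equiv_AE[OF union0] null_equiv_AE[OF union1] by eventually_elim auto
  moreover have "S0 E \<in> sets N" "S1 E \<in> sets N"
    using ST0 ST1 E unfolding set_transformation_def by auto
  ultimately show ?thesis by (intro AE_imp_null_equiv)
qed

theorem lemma6p22:
  fixes M :: "'a measure" and N :: "'b measure" and p :: real
    and s :: "real \<Rightarrow> ('a \<Rightarrow> complex) \<Rightarrow> ('b \<Rightarrow> complex)"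
    and S0 S1 :: "'a set \<Rightarrow> 'b set"
  assumes "p \<ge> 1" and "p \<noteq> 2"
    and "sigma_finite_measure M" and "sigma_finite_measure N"
    and "\<forall>l\<in>{0..1}. Lp_surj_isometry M N p (s l)"
    and "Lp_norm_continuous_path M N p s"
    and "spatial_realization M N p (s 0) S0"
    and "spatial_realization M N p (s 1) S1"
  shows "\<forall>E\<in>sets M. null_equiv N (S0 E) (S1 E)"
proof
  fix E assume E: "E \<in> sets M"
  have supports: "same_indicator_supports M N (s 0) (s 1)"
    using path_same_indicator_supports assms(1,2,5,6) by blast
  have "AE y in N. y \<in> S0 B \<longleftrightarrow> y \<in> S1 B" if B: "B \<in> sets M" "emeasure M B < \<infinity>" for B
  proof -
    have "AE y in N. s 0 (indicator B) y \<noteq> 0 \<longleftrightarrow> s 1 (indicator B) y \<noteq> 0"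
      using supports B unfolding same_indicator_supports_def by blast
    then show ?thesis
      using spatial_realization_indicator_support[OF assms(1,7) B]
        spatial_realization_indicator_support[OF assms(1,8) B]
      by eventually_elim auto
  qed
  moreover have "set_transformation M N S0" "set_transformation M N S1"
    using assms(7,8) by (simp_all add: spatial_realization_def)
  ultimately show "null_equiv N (S0 E) (S1 E)"
    using set_transformations_agree[OF assms(3)] E by blast
qed

end
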